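(* Let $G$ be a bipartite graph, $M$ a matching of $G$, $C$ an $M$-cycle or an $M$-path of $G$, and $x,y$ two vertices of $G - V(C)$ lying in different partite sets of $G$. (1) If $C$ is a cycle and $e_G(\{x,y\}, V(C)) \ge \frac{|C|}{2}+1$, then there is an edge $uv \in E(C)\setminus M$ with $e_G(\{x,y\},\{u,v\}) = 2$. (2) If $C$ is a path and $e_G(\{x,y\}, V(C)) \ge \frac{|C|}{2}+2$, then there is an edge $uv \in E(C)\setminus M$ with $e_G(\{x,y\},\{u,v\}) = 2$.
   Context: Graphs are finite and simple. A cycle $C$ is an $M$-cycle if $|E(C)\cap M|=|C|/2$. An $M$-path is a path whose edges alternate between edges of $M$ and edges not in $M$, beginning and ending with edges of $M$. $|C|$ is the number of vertices; $e_G(S,T)$ is the number of edges between disjoint vertex sets $S$ and $T$. *)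

theory Defs
  imports Complex_Main
begin

definition simple_graph :: "'a set \<Rightarrow> 'a set set \<Rightarrow> bool" where
  "simple_graph V E \<longleftrightarrow> finite V \<and>
     (\<forall>e\<in>E. \<exists>u v. u \<noteq> v \<and> u \<in> V \<and> v \<in> V \<and> e = {u, v})"

definition bipartition :: "'a set \<Rightarrow> 'a set set \<Rightarrow> 'a set \<Rightarrow> 'a set \<Rightarrow> bool" where
  "bipartition V E A B \<longleftrightarrow> A \<union> B = V \<and> A \<inter> B = {} \<and>
     (\<forall>e\<in>E. \<exists>a\<in>A. \<exists>b\<in>B. e = {a, b})"

definition matching :: "'a set set \<Rightarrow> 'a set set \<Rightarrow> bool" where
  "matching E M \<longleftrightarrow> M \<subseteq> E \<and> (\<forall>e1\<in>M. \<forall>e2\<in>M. e1 \<noteq> e2 \<longrightarrow> e1 \<inter> e2 = {})"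

definition path_edges :: "'a list \<Rightarrow> 'a set set" where
  "path_edges vs = {{vs ! i, vs ! Suc i} | i. Suc i < length vs}"

definition cycle_edges :: "'a list \<Rightarrow> 'a set set" where
  "cycle_edges vs = path_edges vs \<union> {{last vs, hd vs}}"

definition is_path :: "'a set \<Rightarrow> 'a set set \<Rightarrow> 'a list \<Rightarrow> bool" where
  "is_path V E vs \<longleftrightarrow> vs \<noteq> [] \<and> distinct vs \<and> set vs \<subseteq> V \<and> path_edges vs \<subseteq> E"

definition is_cycle :: "'a set \<Rightarrow> 'a set set \<Rightarrow> 'a list \<Rightarrow> bool" where
  "is_cycle V E vs \<longleftrightarrow> length vs \<ge> 3 \<and> distinct vs \<and> set vs \<subseteq> V \<and> cycle_edges vs \<subseteq> E"

definition M_cycle :: "'a set \<Rightarrow> 'a set set \<Rightarrow> 'a set set \<Rightarrow> 'a list \<Rightarrow> bool" where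
  "M_cycle V E M vs \<longleftrightarrow> is_cycle V E vs \<and> 2 * card (cycle_edges vs \<inter> M) = length vs"

text \<open>M-path: edges alternate between M and non-M, first and last edge in M.\<close>
definition M_path :: "'a set \<Rightarrow> 'a set set \<Rightarrow> 'a set set \<Rightarrow> 'a list \<Rightarrow> bool" where
  "M_path V E M vs \<longleftrightarrow> is_path V E vs \<and> length vs \<ge> 2 \<and> even (length vs) \<and>
     (\<forall>i. Suc i < length vs \<longrightarrow> ({vs ! i, vs ! Suc i} \<in> M \<longleftrightarrow> even i))"

definition edges_between :: "'a set set \<Rightarrow> 'a set \<Rightarrow> 'a set \<Rightarrow> nat" where
  "edges_between E S T = card {e \<in> E. \<exists>s\<in>S. \<exists>t\<in>T. e = {s, t}}"

end

theory Submission
  imports Defs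
begin

text \<open>Since x and y lie in different partite sets they have no common neighbour, so
  e({x,y}, V(C)) counts the vertices of C adjacent to x or y. The edges of C not in M cover
  all vertices of an M-cycle (a vertex lies on two cycle edges, which cannot both be in M) and
  all but the two ends of an M-path, and there are at most |C|/2, resp. |C|/2 - 1, of them.
  If more vertices than that are adjacent to x or y, then by pigeonhole some non-matching edge
  of C has both its ends adjacent to x or y.\<close>

definition neighbourhood :: "'a set set \<Rightarrow> 'a set \<Rightarrow> 'a set" where
  "neighbourhood E X = {w. \<exists>x\<in>X. {x, w} \<in> E}"

lemma bipartition_no_common_neighbour:
  assumes "bipartition V E A B" and "(x \<in> A \<and> y \<in> B) \<or> (x \<in> B \<and> y \<in> A)"
  shows "\<not> ({x, w} \<in> E \<and> {y, w} \<in> E)"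
proof
  assume xw_yw: "{x, w} \<in> E \<and> {y, w} \<in> E"
  have AB: "A \<inter> B = {}" and edges: "\<forall>e\<in>E. \<exists>a\<in>A. \<exists>b\<in>B. e = {a, b}"
    using assms(1) by (auto simp: bipartition_def)
  from xw_yw edges obtain a1 b1 where "a1 \<in> A" "b1 \<in> B" "{x, w} = {a1, b1}" by blast
  moreover from xw_yw edges obtain a2 b2 where "a2 \<in> A" "b2 \<in> B" "{y, w} = {a2, b2}" by blast
  ultimately show False using assms(2) AB by (auto simp: doubleton_eq_iff)
qed

lemma edges_between_eq_card_neighbourhood:
  assumes bip: "bipartition V E A B" and xy: "(x \<in> A \<and> y \<in> B) \<or> (x \<in> B \<and> y \<in> A)"
    and "x \<notin> S" "y \<notin> S"
  shows "edges_between E {x, y} S = card (S \<inter> neighbourhood E {x, y})"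
proof -
  define N where "N = neighbourhood E {x, y}"
  define g where "g w = (if {x, w} \<in> E then {x, w} else {y, w})" for w
  have "inj_on g (S \<inter> N)"
    using assms(3,4) unfolding inj_on_def g_def by (auto simp: doubleton_eq_iff)
  moreover have "{e \<in> E. \<exists>s\<in>{x, y}. \<exists>t\<in>S. e = {s, t}} = g ` (S \<inter> N)"
  proof
    show "g ` (S \<inter> N) \<subseteq> {e \<in> E. \<exists>s\<in>{x, y}. \<exists>t\<in>S. e = {s, t}}"
      unfolding N_def neighbourhood_def g_def by auto
    show "{e \<in> E. \<exists>s\<in>{x, y}. \<exists>t\<in>S. e = {s, t}} \<subseteq> g ` (S \<inter> N)"
    proof
      fix e assume "e \<in> {e \<in> E. \<exists>s\<in>{x, y}. \<exists>t\<in>S. e = {s, t}}"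
      then obtain s t where st: "e \<in> E" "s \<in> {x, y}" "t \<in> S" "e = {s, t}" by blast
      then have "g t = e"
        using bipartition_no_common_neighbour[OF bip xy, of t] unfolding g_def by auto
      moreover have "t \<in> S \<inter> N" using st unfolding N_def neighbourhood_def by auto
      ultimately show "e \<in> g ` (S \<inter> N)" by blast
    qed
  qed
  ultimately show ?thesis unfolding N_def edges_between_def by (simp add: card_image)
qed

lemma edges_between_doubleton_eq_two:
  assumes "bipartition V E A B" and "(x \<in> A \<and> y \<in> B) \<or> (x \<in> B \<and> y \<in> A)"
    and "x \<notin> {u, v}" "y \<notin> {u, v}"
    and "2 \<le> card ({u, v} \<inter> neighbourhood E {x, y})"
  shows "edges_between E {x, y} {u, v} = 2"
proof -
  have "card ({u, v} \<inter> neighbourhood E {x, y}) \<le> card {u, v}" by (intro card_mono) auto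
  also have "\<dots> \<le> 2" by (rule card_insert_le_m1) auto
  finally show ?thesis
    using assms edges_between_eq_card_neighbourhood[OF assms(1,2)] by simp
qed

lemma pigeonhole_cover:
  assumes "finite F" "finite K" "\<And>f. f \<in> F \<Longrightarrow> finite f"
    and "X \<subseteq> K \<union> \<Union>F" and "card K + card F < card (X \<inter> N)"
  shows "\<exists>f\<in>F. 2 \<le> card (f \<inter> N)"
proof (rule ccontr)
  assume "\<not> ?thesis"
  then have small: "card (f \<inter> N) \<le> 1" if "f \<in> F" for f using that by fastforce
  have "card (X \<inter> N) \<le> card (K \<union> (\<Union>f\<in>F. f \<inter> N))"
    using assms(4) by (intro card_mono) (auto simp: assms(1-3))
  also have "\<dots> \<le> card K + card (\<Union>f\<in>F. f \<inter> N)" by (rule card_Un_le)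
  also have "card (\<Union>f\<in>F. f \<inter> N) \<le> (\<Sum>f\<in>F. card (f \<inter> N))"
    using assms(1) by (rule card_UN_le)
  also have "\<dots> \<le> (\<Sum>f\<in>F. 1)" using small by (intro sum_mono) auto
  finally show False using assms(5) by simp
qed

lemma path_edges_eq_image:
  "path_edges vs = (\<lambda>i. {vs ! i, vs ! Suc i}) ` {..<length vs - 1}"
  unfolding path_edges_def by force

lemma path_edges_subset_cycle_edges: "path_edges vs \<subseteq> cycle_edges vs"
  unfolding cycle_edges_def by blast

lemma finite_cycle_edges: "finite (cycle_edges vs)"
  by (simp add: cycle_edges_def path_edges_eq_image)

lemma card_cycle_edges_le:
  assumes "vs \<noteq> []"
  shows "card (cycle_edges vs) \<le> length vs"
proof -
  have "card (path_edges vs) \<le> length vs - 1"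
    unfolding path_edges_eq_image using card_image_le[of "{..<length vs - 1}"] by simp
  then show ?thesis
    using assms card_insert_le_m1[of "length vs" "path_edges vs" "{last vs, hd vs}"]
    by (simp add: cycle_edges_def path_edges_eq_image)
qed

lemma cycle_edges_are_doubletons:
  assumes "vs \<noteq> []" and "f \<in> cycle_edges vs"
  shows "\<exists>u v. f = {u, v} \<and> u \<in> set vs \<and> v \<in> set vs"
  using assms unfolding cycle_edges_def path_edges_def
  by (blast intro: nth_mem hd_in_set last_in_set Suc_lessD)

lemma cycle_edge_mod:
  assumes "i < length vs"
  shows "{vs ! i, vs ! (Suc i mod length vs)} \<in> cycle_edges vs"
proof (cases "Suc i < length vs")
  case True
  then show ?thesis by (auto simp: cycle_edges_def path_edges_def)
next
  case False
  then have "i = length vs - 1" "vs \<noteq> []" using assms by auto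
  then show ?thesis
    by (simp add: cycle_edges_def last_conv_nth hd_conv_nth insert_commute)
qed

lemma matching_edges_eq_if_shared_vertex:
  assumes "matching E M" and "e1 \<in> M" "e2 \<in> M" and "v \<in> e1" "v \<in> e2"
  shows "e1 = e2"
  using assms unfolding matching_def by (metis disjoint_iff)

lemma M_cycle_vertex_on_non_matching_edge:
  assumes "matching E M" and "M_cycle V E M C" and "v \<in> set C"
  shows "\<exists>f\<in>cycle_edges C - M. v \<in> f"
proof -
  define n where "n = length C"
  have n3: "3 \<le> n" and dist: "distinct C"
    using assms(2) by (auto simp: M_cycle_def is_cycle_def n_def)
  obtain k where k: "k < n" "v = C ! k" using assms(3) by (auto simp: in_set_conv_nth n_def)
  define p where "p = (if k = 0 then n - 1 else k - 1)"
  define next_k where "next_k = Suc k mod n"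
  have p: "p < n" "Suc p mod n = k" by (cases k) (use k n3 in \<open>auto simp: p_def\<close>)
  have "next_k = (if Suc k = n then 0 else Suc k)" using k by (simp add: next_k_def mod_Suc)
  then have "p \<noteq> next_k" using k n3 by (auto simp: p_def)
  moreover have "next_k < n" using n3 by (simp add: next_k_def)
  ultimately have "C ! p \<noteq> C ! next_k" using p dist by (simp add: n_def nth_eq_iff_index_eq)
  then have distinct_edges: "{C ! p, v} \<noteq> {v, C ! next_k}"
    by (auto simp: doubleton_eq_iff)
  have in_cycle: "{C ! p, v} \<in> cycle_edges C" "{v, C ! next_k} \<in> cycle_edges C"
    using cycle_edge_mod[of p C, folded n_def] cycle_edge_mod[of k C, folded n_def, folded next_k_def] p k
    by simp_all
  have "{C ! p, v} \<notin> M \<or> {v, C ! next_k} \<notin> M"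
    using matching_edges_eq_if_shared_vertex[OF assms(1), of _ _ v] distinct_edges by blast
  then show ?thesis using in_cycle by (metis DiffI insertCI)
qed

lemma card_M_cycle_non_matching_edges:
  assumes "M_cycle V E M C"
  shows "2 * card (cycle_edges C - M) \<le> length C"
proof -
  have "C \<noteq> []" and half: "2 * card (cycle_edges C \<inter> M) = length C"
    using assms by (auto simp: M_cycle_def is_cycle_def)
  have "card (cycle_edges C) \<le> length C" using \<open>C \<noteq> []\<close> by (rule card_cycle_edges_le)
  then show ?thesis
    using half by (simp add: card_Diff_subset_Int finite_cycle_edges)
qed

lemma M_path_vertices_covered:
  assumes "M_path V E M C"
  shows "set C \<subseteq> {hd C, last C} \<union> \<Union>(path_edges C - M)"
proof
  define n where "n = length C"
  have "C \<noteq> []" and alt: "\<And>i. Suc i < n \<Longrightarrow> ({C ! i, C ! Suc i} \<in> M \<longleftrightarrow> even i)"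
    using assms by (auto simp: M_path_def is_path_def n_def)
  have odd_edge: "{C ! i, C ! Suc i} \<in> path_edges C - M" if "odd i" "Suc i < n" for i
    using that alt[of i] by (auto simp: path_edges_def n_def)
  fix v assume "v \<in> set C"
  then obtain k where k: "k < n" "v = C ! k" by (auto simp: in_set_conv_nth n_def)
  consider "k = 0" | "k = n - 1" | "odd k" "Suc k < n" | "odd (k - 1)" "0 < k" "Suc (k - 1) < n"
    using k by fastforce
  then show "v \<in> {hd C, last C} \<union> \<Union>(path_edges C - M)"
  proof cases
    case 3
    then show ?thesis using odd_edge k by blast
  next
    case 4
    then show ?thesis using odd_edge[of "k - 1"] k by auto
  qed (use k \<open>C \<noteq> []\<close> in \<open>auto simp: hd_conv_nth last_conv_nth n_def\<close>)
qed

lemma card_M_path_non_matching_edges: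
  assumes "M_path V E M C"
  shows "2 * card (path_edges C - M) + 2 \<le> length C"
proof -
  define n where "n = length C"
  have "2 \<le> n" and ev: "even n" and alt: "\<And>i. Suc i < n \<Longrightarrow> ({C ! i, C ! Suc i} \<in> M \<longleftrightarrow> even i)"
    using assms by (auto simp: M_path_def n_def)
  define odd_edge where "odd_edge j = {C ! (2 * j + 1), C ! Suc (2 * j + 1)}" for j
  have "path_edges C - M \<subseteq> odd_edge ` {..<n div 2 - 1}"
  proof
    fix f assume "f \<in> path_edges C - M"
    then obtain i where i: "Suc i < n" "f = {C ! i, C ! Suc i}" "f \<notin> M"
      by (auto simp: path_edges_def n_def)
    then have "odd i" using alt by blast
    then obtain j where j: "i = 2 * j + 1" by (rule oddE)
    have "j < n div 2 - 1" using i(1) ev j by (auto elim!: evenE)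
    then show "f \<in> odd_edge ` {..<n div 2 - 1}"
      using i(2) j unfolding odd_edge_def by blast
  qed
  then have "card (path_edges C - M) \<le> card (odd_edge ` {..<n div 2 - 1})"
    by (intro card_mono) auto
  also have "\<dots> \<le> n div 2 - 1" using card_image_le[of "{..<n div 2 - 1}" odd_edge] by simp
  finally show ?thesis using \<open>2 \<le> n\<close> ev unfolding n_def by (auto elim!: evenE)
qed

lemma cover_edge_with_two_edges_to_pair:
  assumes bip: "bipartition V E A B" and xy: "(x \<in> A \<and> y \<in> B) \<or> (x \<in> B \<and> y \<in> A)"
    and "x \<notin> set C" "y \<notin> set C" and "C \<noteq> []"
    and F: "F \<subseteq> cycle_edges C" and K: "finite K" "set C \<subseteq> K \<union> \<Union>F"
    and many: "card K + card F < edges_between E {x, y} (set C)"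
  shows "\<exists>u v. {u, v} \<in> F \<and> edges_between E {x, y} {u, v} = 2"
proof -
  define N where "N = neighbourhood E {x, y}"
  have "card K + card F < card (set C \<inter> N)"
    using many edges_between_eq_card_neighbourhood[OF bip xy assms(3,4)] unfolding N_def by simp
  moreover have "finite F" using F finite_cycle_edges by (rule finite_subset)
  moreover have "finite f" if "f \<in> F" for f
    using cycle_edges_are_doubletons[OF \<open>C \<noteq> []\<close>] F that by blast
  ultimately obtain f where "f \<in> F" "2 \<le> card (f \<inter> N)"
    using pigeonhole_cover[OF _ K(1) _ K(2)] by blast
  moreover obtain u v where "f = {u, v}" "u \<in> set C" "v \<in> set C"
    using cycle_edges_are_doubletons \<open>C \<noteq> []\<close> \<open>f \<in> F\<close> F by blast
  moreover have "x \<notin> {u, v}" "y \<notin> {u, v}"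
    using assms(3,4) \<open>u \<in> set C\<close> \<open>v \<in> set C\<close> by auto
  ultimately show ?thesis
    using edges_between_doubleton_eq_two[OF bip xy] unfolding N_def by blast
qed

lemma M_cycle_non_matching_edge_with_two_edges_to_pair:
  assumes "bipartition V E A B" and "(x \<in> A \<and> y \<in> B) \<or> (x \<in> B \<and> y \<in> A)"
    and "matching E M" and cyc: "M_cycle V E M C" and "x \<notin> set C" "y \<notin> set C"
    and many: "length C + 2 \<le> 2 * edges_between E {x, y} (set C)"
  shows "\<exists>u v. {u, v} \<in> cycle_edges C - M \<and> edges_between E {x, y} {u, v} = 2"
proof (rule cover_edge_with_two_edges_to_pair[OF assms(1,2,5,6)])
  show "C \<noteq> []" using cyc by (auto simp: M_cycle_def is_cycle_def)
  show "set C \<subseteq> {} \<union> \<Union>(cycle_edges C - M)"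
    using M_cycle_vertex_on_non_matching_edge[OF assms(3) cyc] by blast
  show "card {} + card (cycle_edges C - M) < edges_between E {x, y} (set C)"
    using card_M_cycle_non_matching_edges[OF cyc] many by simp
qed auto

lemma M_path_non_matching_edge_with_two_edges_to_pair:
  assumes "bipartition V E A B" and "(x \<in> A \<and> y \<in> B) \<or> (x \<in> B \<and> y \<in> A)"
    and path: "M_path V E M C" and "x \<notin> set C" "y \<notin> set C"
    and many: "length C + 4 \<le> 2 * edges_between E {x, y} (set C)"
  shows "\<exists>u v. {u, v} \<in> path_edges C - M \<and> edges_between E {x, y} {u, v} = 2"
proof (rule cover_edge_with_two_edges_to_pair[OF assms(1,2,4,5)])
  show "C \<noteq> []" using path by (auto simp: M_path_def is_path_def)
  show "path_edges C - M \<subseteq> cycle_edges C" using path_edges_subset_cycle_edges by blast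
  show "set C \<subseteq> {hd C, last C} \<union> \<Union>(path_edges C - M)"
    using path by (rule M_path_vertices_covered)
  have "card {hd C, last C} \<le> 2" by (simp add: card_insert_if)
  then show "card {hd C, last C} + card (path_edges C - M) < edges_between E {x, y} (set C)"
    using card_M_path_non_matching_edges[OF path] many by linarith
qed auto

theorem lemma3:
  fixes V :: "'a set" and E M :: "'a set set" and A B :: "'a set"
    and C :: "'a list" and x y :: 'a
  assumes "simple_graph V E"
    and "bipartition V E A B"
    and "matching E M"
    and "M_cycle V E M C \<or> M_path V E M C"
    and "x \<in> V - set C" and "y \<in> V - set C"
    and "(x \<in> A \<and> y \<in> B) \<or> (x \<in> B \<and> y \<in> A)"
  shows "(M_cycle V E M C \<and> real (edges_between E {x, y} (set C)) \<ge> real (length C) / 2 + 1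
            \<longrightarrow> (\<exists>u v. {u, v} \<in> cycle_edges C - M \<and> edges_between E {x, y} {u, v} = 2))
       \<and> (M_path V E M C \<and> real (edges_between E {x, y} (set C)) \<ge> real (length C) / 2 + 2
            \<longrightarrow> (\<exists>u v. {u, v} \<in> path_edges C - M \<and> edges_between E {x, y} {u, v} = 2))"
proof -
  have outside: "x \<notin> set C" "y \<notin> set C" using assms(5,6) by auto
  show ?thesis
  proof (intro conjI impI; elim conjE)
    assume cyc: "M_cycle V E M C"
      and "real (length C) / 2 + 1 \<le> real (edges_between E {x, y} (set C))"
    then have "length C + 2 \<le> 2 * edges_between E {x, y} (set C)" by linarith
    then show "\<exists>u v. {u, v} \<in> cycle_edges C - M \<and> edges_between E {x, y} {u, v} = 2"
      by (rule M_cycle_non_matching_edge_with_two_edges_to_pair[OF assms(2,7,3) cyc outside])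
  next
    assume path: "M_path V E M C"
      and "real (length C) / 2 + 2 \<le> real (edges_between E {x, y} (set C))"
    then have "length C + 4 \<le> 2 * edges_between E {x, y} (set C)" by linarith
    then show "\<exists>u v. {u, v} \<in> path_edges C - M \<and> edges_between E {x, y} {u, v} = 2"
      by (rule M_path_non_matching_edge_with_two_edges_to_pair[OF assms(2,7) path outside])
  qed
qed

end
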